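(* Let $1\le i,j,k,l\le n$ with $i<j$ and $k<l$. In ${\boldsymbol U}_{v}(\mathfrak q_n)$: if $i<j<k<l$, or $i<k<l<j$, or ($i=k$ and $j=l$), or $k<l<i<j$, or $k<i<j<l$, then $\mathsf E_{i,j}\overline{\mathsf E}_{k,l}=\overline{\mathsf E}_{k,l}\mathsf E_{i,j}$; moreover \[ \mathsf E_{i,j}\overline{\mathsf E}_{k,l}=\begin{cases} v^{-1}\overline{\mathsf E}_{k,l}\mathsf E_{i,j}-\overline{\mathsf E}_{i,l} & (i<j=k<l),\\ v\,\overline{\mathsf E}_{k,l}\mathsf E_{i,j} & (i=k<j<l),\\ \overline{\mathsf E}_{k,l}\mathsf E_{i,j}+(v-v^{-1})\mathsf E_{k,j}\overline{\mathsf E}_{i,l} & (i<k<j<l),\\ v^{-1}\overline{\mathsf E}_{k,l}\mathsf E_{i,j}+\overline{\mathsf E}_{i,j}\mathsf E_{k,j}-v^{-1}\mathsf E_{k,j}\overline{\mathsf E}_{i,j} & (i<k<j=l),\\ v^{-1}\overline{\mathsf E}_{k,l}\mathsf E_{i,j}-(\mathsf E_{\bar i}\mathsf E_{i+1,j}-v^{-1}\mathsf E_{i+1,j}\mathsf E_{\bar i})\mathsf E_{k,i}+v^{-1}\mathsf E_{k,i}(\mathsf E_{\bar i}\mathsf E_{i+1,j}-v^{-1}\mathsf E_{i+1,j}\mathsf E_{\bar i}) & (k<l=i<j,\ j>i+1),\\ v^{-1}\overline{\mathsf E}_{k,l}\mathsf E_{i,j} & (k=i<l<j),\\ \overline{\mathsf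 E}_{k,l}\mathsf E_{i,j}+v^{-1}\overline{\mathsf E}_{i,l}\mathsf E_{k,j}-v\,\mathsf E_{k,j}\overline{\mathsf E}_{i,l} & (k<i<l<j),\\ v\,\overline{\mathsf E}_{k,l}\mathsf E_{i,j}-v\,\mathsf E_{k,j}\overline{\mathsf E}_{i,j}+\overline{\mathsf E}_{i,j}\mathsf E_{k,j} & (k<i<j=l). \end{cases} \]
   Context: Let $v$ be an indeterminate. The quantum queer superalgebra ${\boldsymbol U}_{v}(\mathfrak q_n)$ is the associative superalgebra over $\mathbb Q(v)$ generated by even generators $\mathsf K_i,\mathsf K_i^{-1}$ ($1\le i\le n$), $\mathsf E_j,\mathsf F_j$ ($1\le j\le n-1$) and odd generators $\mathsf K_{\bar i}$ ($1\le i\le n$), $\mathsf E_{\bar j},\mathsf F_{\bar j}$ ($1\le j\le n-1$), subject to the following relations (indices are taken only where they make sense), where $(\epsilon_i,\alpha_j)=\delta_{i,j}-\delta_{i,j+1}$: (QQ1) $\mathsf K_i\mathsf K_i^{-1}=\mathsf K_i^{-1}\mathsf K_i=1$, $\mathsf K_i\mathsf K_j=\mathsf K_j\mathsf K_i$, $\mathsf K_i\mathsf K_{\bar j}=\mathsf K_{\bar j}\mathsf K_i$, $\mathsf K_{\bar i}\mathsf K_{\bar j}+\mathsf K_{\bar j}\mathsf K_{\bar i}=2\delta_{i,j}\frac{\mathsf K_i^2-\mathsf K_i^{-2}}{v^2-v^{-2}}$. (QQ2) $\mathsf K_i\mathsf E_j=v^{(\epsilon_i,\alpha_j)}\mathsf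 E_j\mathsf K_i$, $\mathsf K_i\mathsf E_{\bar j}=v^{(\epsilon_i,\alpha_j)}\mathsf E_{\bar j}\mathsf K_i$, $\mathsf K_i\mathsf F_j=v^{-(\epsilon_i,\alpha_j)}\mathsf F_j\mathsf K_i$, $\mathsf K_i\mathsf F_{\bar j}=v^{-(\epsilon_i,\alpha_j)}\mathsf F_{\bar j}\mathsf K_i$. (QQ3) $\mathsf K_{\bar i}\mathsf E_i-v\mathsf E_i\mathsf K_{\bar i}=\mathsf E_{\bar i}\mathsf K_i^{-1}$, $v\mathsf K_{\bar i}\mathsf E_{i-1}-\mathsf E_{i-1}\mathsf K_{\bar i}=-\mathsf K_i^{-1}\mathsf E_{\overline{i-1}}$, $\mathsf K_{\bar i}\mathsf F_i-v\mathsf F_i\mathsf K_{\bar i}=-\mathsf F_{\bar i}\mathsf K_i$, $v\mathsf K_{\bar i}\mathsf F_{i-1}-\mathsf F_{i-1}\mathsf K_{\bar i}=\mathsf K_i\mathsf F_{\overline{i-1}}$, $\mathsf K_{\bar i}\mathsf E_{\bar i}+v\mathsf E_{\bar i}\mathsf K_{\bar i}=\mathsf E_i\mathsf K_i^{-1}$, $v\mathsf K_{\bar i}\mathsf E_{\overline{i-1}}+\mathsf E_{\overline{i-1}}\mathsf K_{\bar i}=\mathsf K_i^{-1}\mathsf E_{i-1}$, $\mathsf K_{\bar i}\mathsf F_{\bar i}+v\mathsf F_{\bar i}\mathsf K_{\bar i}=\mathsf F_i\mathsf K_i$, $v\mathsf K_{\bar i}\mathsf F_{\overline{i-1}}+\mathsf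 F_{\overline{i-1}}\mathsf K_{\bar i}=\mathsf K_i\mathsf F_{i-1}$, and for $j\ne i,i-1$: $\mathsf K_{\bar i}\mathsf E_j=\mathsf E_j\mathsf K_{\bar i}$, $\mathsf K_{\bar i}\mathsf F_j=\mathsf F_j\mathsf K_{\bar i}$, $\mathsf K_{\bar i}\mathsf E_{\bar j}=-\mathsf E_{\bar j}\mathsf K_{\bar i}$, $\mathsf K_{\bar i}\mathsf F_{\bar j}=-\mathsf F_{\bar j}\mathsf K_{\bar i}$. (QQ4) $\mathsf E_i\mathsf F_j-\mathsf F_j\mathsf E_i=\delta_{i,j}\frac{\mathsf K_i\mathsf K_{i+1}^{-1}-\mathsf K_i^{-1}\mathsf K_{i+1}}{v-v^{-1}}$, $\mathsf E_{\bar i}\mathsf F_{\bar j}+\mathsf F_{\bar j}\mathsf E_{\bar i}=\delta_{i,j}\big(\frac{\mathsf K_i\mathsf K_{i+1}-\mathsf K_i^{-1}\mathsf K_{i+1}^{-1}}{v-v^{-1}}+(v-v^{-1})\mathsf K_{\bar i}\mathsf K_{\overline{i+1}}\big)$, $\mathsf E_i\mathsf F_{\bar j}-\mathsf F_{\bar j}\mathsf E_i=\delta_{i,j}(\mathsf K_{i+1}^{-1}\mathsf K_{\bar i}-\mathsf K_{\overline{i+1}}\mathsf K_i^{-1})$, $\mathsf E_{\bar i}\mathsf F_j-\mathsf F_j\mathsf E_{\bar i}=\delta_{i,j}(\mathsf K_{i+1}\mathsf K_{\bar i}-\mathsf K_{\overline{i+1}}\mathsf K_i)$. (QQ5) $\mathsf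 E_{\bar i}^2=-\frac{v-v^{-1}}{v+v^{-1}}\mathsf E_i^2$, $\mathsf F_{\bar i}^2=\frac{v-v^{-1}}{v+v^{-1}}\mathsf F_i^2$; for $|i-j|\ne1$: $\mathsf E_i\mathsf E_{\bar j}=\mathsf E_{\bar j}\mathsf E_i$, $\mathsf F_i\mathsf F_{\bar j}=\mathsf F_{\bar j}\mathsf F_i$; for $|i-j|>1$: $\mathsf E_i\mathsf E_j=\mathsf E_j\mathsf E_i$, $\mathsf F_i\mathsf F_j=\mathsf F_j\mathsf F_i$, $\mathsf E_{\bar i}\mathsf E_{\bar j}=-\mathsf E_{\bar j}\mathsf E_{\bar i}$, $\mathsf F_{\bar i}\mathsf F_{\bar j}=-\mathsf F_{\bar j}\mathsf F_{\bar i}$; $\mathsf E_i\mathsf E_{i+1}-v\mathsf E_{i+1}\mathsf E_i=\mathsf E_{\bar i}\mathsf E_{\overline{i+1}}+v\mathsf E_{\overline{i+1}}\mathsf E_{\bar i}$, $\mathsf E_i\mathsf E_{\overline{i+1}}-v\mathsf E_{\overline{i+1}}\mathsf E_i=\mathsf E_{\bar i}\mathsf E_{i+1}-v\mathsf E_{i+1}\mathsf E_{\bar i}$, $\mathsf F_i\mathsf F_{i+1}-v\mathsf F_{i+1}\mathsf F_i=-(\mathsf F_{\bar i}\mathsf F_{\overline{i+1}}+v\mathsf F_{\overline{i+1}}\mathsf F_{\bar i})$, $\mathsf F_i\mathsf F_{\overline{i+1}}-v\mathsf F_{\overline{i+1}}\mathsf F_i=\mathsf F_{\bar i}\mathsf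 F_{i+1}-v\mathsf F_{i+1}\mathsf F_{\bar i}$. (QQ6) for $|i-j|=1$: $\mathsf E_i^2X-(v+v^{-1})\mathsf E_iX\mathsf E_i+X\mathsf E_i^2=0$ for $X\in\{\mathsf E_j,\mathsf E_{\bar j}\}$ and $\mathsf F_i^2Y-(v+v^{-1})\mathsf F_iY\mathsf F_i+Y\mathsf F_i^2=0$ for $Y\in\{\mathsf F_j,\mathsf F_{\bar j}\}$. Quantum root vectors: for $1\le i\le n-1$ put $\mathsf E_{i,i+1}=\mathsf E_i$, $\overline{\mathsf E}_{i,i+1}=\mathsf E_{\bar i}$, $\mathsf E_{i+1,i}=\mathsf F_i$, $\overline{\mathsf E}_{i+1,i}=\mathsf F_{\bar i}$, and recursively for $i+1<j\le n$: $\mathsf E_{i,j}=-\mathsf E_{i,j-1}\mathsf E_{j-1}+v^{-1}\mathsf E_{j-1}\mathsf E_{i,j-1}$, $\overline{\mathsf E}_{i,j}=-\mathsf E_{i,j-1}\mathsf E_{\overline{j-1}}+v^{-1}\mathsf E_{\overline{j-1}}\mathsf E_{i,j-1}$, $\mathsf E_{j,i}=-\mathsf F_{j-1}\mathsf E_{j-1,i}+v\mathsf E_{j-1,i}\mathsf F_{j-1}$, $\overline{\mathsf E}_{j,i}=-\mathsf F_{\overline{j-1}}\mathsf E_{j-1,i}+v\mathsf E_{j-1,i}\mathsf F_{\overline{j-1}}$. *)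

theory Defs
  imports "HOL-Computational_Algebra.Polynomial" "HOL-Computational_Algebra.Fraction_Field"
begin

type_synonym qv = "rat poly fract"

definition vv :: qv where "vv = Fract [:0, 1:] 1"

definition eps_alpha :: "nat \<Rightarrow> nat \<Rightarrow> int" where
  "eps_alpha i j = (if i = j then 1 else 0) - (if i = j + 1 then 1 else 0)"

(* A Q(v)-algebra structure on the ring 'a: s is a ring homomorphism Q(v) -> 'a
   with central image. *)
definition qv_algebra :: "(qv \<Rightarrow> 'a::ring_1) \<Rightarrow> bool" where
  "qv_algebra s \<longleftrightarrow> s 1 = 1 \<and> (\<forall>a b. s (a + b) = s a + s b) \<and> (\<forall>a b. s (a * b) = s a * s b)
     \<and> (\<forall>a x. s a * x = x * s a)"

(* Elements K_i, K_i^{-1}, K_{bar i} (1 <= i <= n), E_j, E_{bar j}, F_j, F_{bar j} (1 <= j <= n-1)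
   of the Q(v)-algebra satisfy the defining relations (QQ1)-(QQ6) of U_v(q_n). *)
definition qq_relations ::
  "(qv \<Rightarrow> 'a::ring_1) \<Rightarrow> nat \<Rightarrow> (nat \<Rightarrow> 'a) \<Rightarrow> (nat \<Rightarrow> 'a) \<Rightarrow> (nat \<Rightarrow> 'a)
    \<Rightarrow> (nat \<Rightarrow> 'a) \<Rightarrow> (nat \<Rightarrow> 'a) \<Rightarrow> (nat \<Rightarrow> 'a) \<Rightarrow> (nat \<Rightarrow> 'a) \<Rightarrow> bool" where
  "qq_relations s n K Ki Kb E Eb F Fb \<longleftrightarrow>
   (let v = s vv; vi = s (inverse vv) in
   \<comment> \<open>QQ1\<close>
   (\<forall>i\<in>{1..n}. K i * Ki i = 1 \<and> Ki i * K i = 1) \<and>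
   (\<forall>i\<in>{1..n}. \<forall>j\<in>{1..n}. K i * K j = K j * K i \<and> K i * Kb j = Kb j * K i \<and>
      Kb i * Kb j + Kb j * Kb i =
        (if i = j then 2 * s (inverse (vv^2 - (inverse vv)^2)) * (K i ^ 2 - Ki i ^ 2) else 0)) \<and>
   \<comment> \<open>QQ2\<close>
   (\<forall>i\<in>{1..n}. \<forall>j\<in>{1..n-1}.
      K i * E j = s (vv powi eps_alpha i j) * E j * K i \<and>
      K i * Eb j = s (vv powi eps_alpha i j) * Eb j * K i \<and>
      K i * F j = s (vv powi (- eps_alpha i j)) * F j * K i \<and>
      K i * Fb j = s (vv powi (- eps_alpha i j)) * Fb j * K i) \<and>
   \<comment> \<open>QQ3\<close>
   (\<forall>i\<in>{1..n}.
      (i \<le> n - 1 \<longrightarrow>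
         Kb i * E i - v * E i * Kb i = Eb i * Ki i \<and>
         Kb i * F i - v * F i * Kb i = - (Fb i * K i) \<and>
         Kb i * Eb i + v * Eb i * Kb i = E i * Ki i \<and>
         Kb i * Fb i + v * Fb i * Kb i = F i * K i) \<and>
      (2 \<le> i \<longrightarrow>
         v * Kb i * E (i-1) - E (i-1) * Kb i = - (Ki i * Eb (i-1)) \<and>
         v * Kb i * F (i-1) - F (i-1) * Kb i = K i * Fb (i-1) \<and>
         v * Kb i * Eb (i-1) + Eb (i-1) * Kb i = Ki i * E (i-1) \<and>
         v * Kb i * Fb (i-1) + Fb (i-1) * Kb i = K i * F (i-1)) \<and>
      (\<forall>j\<in>{1..n-1}. j \<noteq> i \<and> j \<noteq> i - 1 \<longrightarrow>
         Kb i * E j = E j * Kb i \<and> Kb i * F j = F j * Kb i \<and>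
         Kb i * Eb j = - (Eb j * Kb i) \<and> Kb i * Fb j = - (Fb j * Kb i))) \<and>
   \<comment> \<open>QQ4\<close>
   (\<forall>i\<in>{1..n-1}. \<forall>j\<in>{1..n-1}.
      E i * F j - F j * E i =
        (if i = j then s (inverse (vv - inverse vv)) * (K i * Ki (i+1) - Ki i * K (i+1)) else 0) \<and>
      Eb i * Fb j + Fb j * Eb i =
        (if i = j then s (inverse (vv - inverse vv)) * (K i * K (i+1) - Ki i * Ki (i+1))
                        + s (vv - inverse vv) * Kb i * Kb (i+1) else 0) \<and>
      E i * Fb j - Fb j * E i = (if i = j then Ki (i+1) * Kb i - Kb (i+1) * Ki i else 0) \<and>
      Eb i * F j - F j * Eb i = (if i = j then K (i+1) * Kb i - Kb (i+1) * K i else 0)) \<and>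
   \<comment> \<open>QQ5\<close>
   (\<forall>i\<in>{1..n-1}.
      Eb i ^ 2 = - (s ((vv - inverse vv) / (vv + inverse vv)) * E i ^ 2) \<and>
      Fb i ^ 2 = s ((vv - inverse vv) / (vv + inverse vv)) * F i ^ 2) \<and>
   (\<forall>i\<in>{1..n-1}. \<forall>j\<in>{1..n-1}.
      (\<not> (i = j + 1 \<or> j = i + 1) \<longrightarrow> E i * Eb j = Eb j * E i \<and> F i * Fb j = Fb j * F i) \<and>
      (i + 1 < j \<or> j + 1 < i \<longrightarrow>
         E i * E j = E j * E i \<and> F i * F j = F j * F i \<and>
         Eb i * Eb j = - (Eb j * Eb i) \<and> Fb i * Fb j = - (Fb j * Fb i))) \<and>
   (\<forall>i. 1 \<le> i \<and> i + 1 \<le> n - 1 \<longrightarrow>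
      E i * E (i+1) - v * E (i+1) * E i = Eb i * Eb (i+1) + v * Eb (i+1) * Eb i \<and>
      E i * Eb (i+1) - v * Eb (i+1) * E i = Eb i * E (i+1) - v * E (i+1) * Eb i \<and>
      F i * F (i+1) - v * F (i+1) * F i = - (Fb i * Fb (i+1) + v * Fb (i+1) * Fb i) \<and>
      F i * Fb (i+1) - v * Fb (i+1) * F i = Fb i * F (i+1) - v * F (i+1) * Fb i) \<and>
   \<comment> \<open>QQ6\<close>
   (\<forall>i\<in>{1..n-1}. \<forall>j\<in>{1..n-1}. (i = j + 1 \<or> j = i + 1) \<longrightarrow>
      (\<forall>X\<in>{E j, Eb j}. E i ^ 2 * X - s (vv + inverse vv) * E i * X * E i + X * E i ^ 2 = 0) \<and>
      (\<forall>Y\<in>{F j, Fb j}. F i ^ 2 * Y - s (vv + inverse vv) * F i * Y * F i + Y * F i ^ 2 = 0)))"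

(* Quantum root vectors E_{i,j} and bar E_{i,j} for i < j, indexed by d = j - i - 1;
   w stands for v^{-1}. *)
fun rootE_aux :: "'a::ring_1 \<Rightarrow> (nat \<Rightarrow> 'a) \<Rightarrow> nat \<Rightarrow> nat \<Rightarrow> 'a" where
  "rootE_aux w E i 0 = E i"
| "rootE_aux w E i (Suc d) =
     - (rootE_aux w E i d * E (i + d + 1)) + w * E (i + d + 1) * rootE_aux w E i d"

fun rootEb_aux :: "'a::ring_1 \<Rightarrow> (nat \<Rightarrow> 'a) \<Rightarrow> (nat \<Rightarrow> 'a) \<Rightarrow> nat \<Rightarrow> nat \<Rightarrow> 'a" where
  "rootEb_aux w E Eb i 0 = Eb i"
| "rootEb_aux w E Eb i (Suc d) =
     - (rootE_aux w E i d * Eb (i + d + 1)) + w * Eb (i + d + 1) * rootE_aux w E i d"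

definition qE :: "(qv \<Rightarrow> 'a::ring_1) \<Rightarrow> (nat \<Rightarrow> 'a) \<Rightarrow> nat \<Rightarrow> nat \<Rightarrow> 'a" where
  "qE s E i j = rootE_aux (s (inverse vv)) E i (j - i - 1)"

definition qEb :: "(qv \<Rightarrow> 'a::ring_1) \<Rightarrow> (nat \<Rightarrow> 'a) \<Rightarrow> (nat \<Rightarrow> 'a) \<Rightarrow> nat \<Rightarrow> nat \<Rightarrow> 'a" where
  "qEb s E Eb i j = rootEb_aux (s (inverse vv)) E Eb i (j - i - 1)"

end

theory Submission
  imports Defs
begin

(*
  Both kinds of root vectors are iterated q-commutators [a, b] = v^-1 b a - a b of simple
  generators: E_{i,j} is built from E_i, ..., E_{j-1}, and \bar E_{k,l} from the same family with
  E_{l-1} replaced by E_{\overline{l-1}}.  Identities between ordinary root vectors that use only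
  far commutativity and the quantum Serre relations therefore persist in the modified family as
  long as no Serre relation with E_{\overline{l-1}} in the quadratic position is needed; this
  settles the non-trivial cases with j < l.  In the other cases one expands
  \bar E_{k,l} = [E_{k,l-1}, E_{\overline{l-1}}] and moves E_{i,j} past E_{\overline{l-1}}.  The
  rules for doing so are proved by induction on the length of E_{i,j}, starting from identities
  among at most three simple generators which rest on the mixed relation
  E_i E_{\overline{i+1}} - v E_{\overline{i+1}} E_i = E_{\bar i} E_{i+1} - v E_{i+1} E_{\bar i}.
*)

definition root_vector :: "'a::ring_1 \<Rightarrow> (nat \<Rightarrow> 'a) \<Rightarrow> nat \<Rightarrow> nat \<Rightarrow> 'a" where
  "root_vector w G i j = rootE_aux w G i (j - i - 1)"

lemma rootE_aux_cong:
  "(\<And>a. i \<le> a \<Longrightarrow> a \<le> i + d \<Longrightarrow> G a = H a) \<Longrightarrow> rootE_aux w G i d = rootE_aux w H i d"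
  by (induction d) auto

lemma root_vector_cong:
  "i < j \<Longrightarrow> (\<And>a. i \<le> a \<Longrightarrow> a < j \<Longrightarrow> G a = H a) \<Longrightarrow> root_vector w G i j = root_vector w H i j"
  unfolding root_vector_def by (rule rootE_aux_cong) auto

lemma root_vector_Suc [simp]: "root_vector w G i (Suc i) = G i"
  by (simp add: root_vector_def)

lemma root_vector_Suc_right:
  assumes "i < j"
  shows "root_vector w G i (Suc j) = w * (G j * root_vector w G i j) - root_vector w G i j * G j"
proof -
  obtain d where "j = Suc (i + d)"
    using assms less_imp_Suc_add by blast
  then show ?thesis
    by (simp add: root_vector_def mult.assoc)
qed

(* Lets a commutation rule a * b = c act inside the right-nested products of algebra_simps. *)
lemma mult_eq_extend_right: "a * b = (c::'a::ring_1) \<Longrightarrow> a * (b * z) = c * z"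
  by (simp flip: mult.assoc)

lemma rootE_aux_commute:
  assumes "\<And>a. i \<le> a \<Longrightarrow> a \<le> i + d \<Longrightarrow> x * G a = G a * x" and "x * w = w * x"
  shows "x * rootE_aux w G i d = rootE_aux w G i d * x"
  using assms(1)
proof (induction d)
  case (Suc d)
  then have IH: "x * rootE_aux w G i d = rootE_aux w G i d * x"
    and c: "x * G (Suc (i + d)) = G (Suc (i + d)) * x"
    by auto
  show ?case
    by (simp add: ring_distribs mult.assoc IH IH[THEN mult_eq_extend_right] c
        c[THEN mult_eq_extend_right] assms(2) assms(2)[THEN mult_eq_extend_right])
qed simp

lemma root_vector_commute:
  "i < j \<Longrightarrow> (\<And>a. i \<le> a \<Longrightarrow> a < j \<Longrightarrow> x * G a = G a * x) \<Longrightarrow> x * w = w * x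
    \<Longrightarrow> x * root_vector w G i j = root_vector w G i j * x"
  unfolding root_vector_def by (rule rootE_aux_commute) auto

locale central_scalars =
  fixes v w :: "'a::ring_1"
  assumes v_w_inverse: "v * w = 1"
    and v_central: "\<And>x. v * x = x * v"
    and w_central: "\<And>x. w * x = x * w"
    and v_plus_w_cancel: "\<And>x. (v + w) * x = 0 \<Longrightarrow> x = 0"
begin

lemma scalar_commute:
  "x * (v * y) = v * (x * y)" "x * v = v * x" "x * (w * y) = w * (x * y)" "x * w = w * x"
  by (simp_all add: v_central[of x] w_central[of x] flip: mult.assoc)

lemma v_w_cancel: "v * (w * x) = x" "w * (v * x) = x"
  using v_w_inverse v_central[of w] by (simp_all flip: mult.assoc)

abbreviation qcomm :: "'a \<Rightarrow> 'a \<Rightarrow> 'a" where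
  "qcomm a b \<equiv> w * (b * a) - a * b"

(*
  Base cases of the inductions below.  Each one exhibits the difference of the two sides, possibly
  times the cancellable factor v + w, as a two-sided combination of the relations assumed.
*)
lemma qcomm_serre_commute:
  assumes "x * z = z * x"
    and "y * y * x - (v + w) * y * x * y + x * y * y = 0"
    and "y * y * z - (v + w) * y * z * y + z * y * y = 0"
  defines "c \<equiv> qcomm (qcomm x y) z"
  shows "y * c = c * y"
proof -
  let ?C = "x * z - z * x"
  let ?S = "y * y * x - (v + w) * y * x * y + x * y * y"
  let ?T = "y * y * z - (v + w) * y * z * y + z * y * y"
  have "(v + w) * (y * c - c * y) =
      - (?C * y * y) + (w * w + 1) * (y * ?C * y) - w * w * (y * y * ?C)
      - ?S * z + w * w * (z * ?S) - w * w * (?T * x) + x * ?T"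
    unfolding c_def
    by (simp add: algebra_simps v_w_cancel scalar_commute[of x] scalar_commute[of y]
        scalar_commute[of z])
  also have "\<dots> = 0"
    using assms by simp
  finally have "y * c - c * y = 0"
    by (rule v_plus_w_cancel)
  then show ?thesis
    by simp
qed

lemma qcomm_bar_first:
  assumes "x * xb = xb * x"
    and "x * x * yb - (v + w) * x * yb * x + yb * x * x = 0"
    and "x * yb - v * yb * x = xb * y - v * y * xb"
  defines "c \<equiv> qcomm x y"
  shows "c * xb = w * (xb * c)"
proof -
  let ?C = "x * xb - xb * x"
  let ?S = "x * x * yb - (v + w) * x * yb * x + yb * x * x"
  let ?M = "x * yb - v * yb * x - (xb * y - v * y * xb)"
  have "c * xb - w * (xb * c) =
      - w * (?C * y) + w * (y * ?C) + w * ?S + w * w * (?M * x) - w * (x * ?M)"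
    unfolding c_def
    by (simp add: algebra_simps v_w_cancel scalar_commute[of x] scalar_commute[of y]
        scalar_commute[of xb] scalar_commute[of yb])
  also have "\<dots> = 0"
    using assms by simp
  finally show ?thesis
    by simp
qed

lemma qcomm_bar_inner:
  assumes "x * z = z * x" "x * zb = zb * x" "y * yb = yb * y"
    and "y * y * x - (v + w) * y * x * y + x * y * y = 0"
    and "y * y * xb - (v + w) * y * xb * y + xb * y * y = 0"
    and "y * y * zb - (v + w) * y * zb * y + zb * y * y = 0"
    and "x * yb - v * yb * x = xb * y - v * y * xb"
    and "y * zb - v * zb * y = yb * z - v * z * yb"
  defines "c \<equiv> qcomm (qcomm x y) z"
  shows "c * yb = yb * c"
proof -
  let ?Cxz = "x * z - z * x" and ?Cxzb = "x * zb - zb * x" and ?Cy = "y * yb - yb * y"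
  let ?Sx = "y * y * x - (v + w) * y * x * y + x * y * y"
  let ?Sxb = "y * y * xb - (v + w) * y * xb * y + xb * y * y"
  let ?Szb = "y * y * zb - (v + w) * y * zb * y + zb * y * y"
  let ?Mx = "x * yb - v * yb * x - (xb * y - v * y * xb)"
  let ?My = "y * zb - v * zb * y - (yb * z - v * z * yb)"
  have "(v + w) * (c * yb - yb * c) =
      ?Cxzb * y * y - (w * w + 1) * (y * ?Cxzb * y) + w * w * (y * y * ?Cxzb)
      + (w * w + 1) * (?Cxz * y * yb - ?Cxz * yb * y)
      + (w * w + 1) * (x * ?Cy * z + z * ?Cy * x - ?Cy * x * z - x * z * ?Cy)
      - w * w * (?Sx * zb) + zb * ?Sx + (w * w + 1) * (?Sxb * z - z * ?Sxb)
      + w * w * (?Szb * x) - x * ?Szb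
      + (w * w + 1) * (?Mx * y * z - z * ?Mx * y) - (w * w * w + w) * (y * ?Mx * z - z * y * ?Mx)
      + (w * w + 1) * (x * y * ?My - ?My * x * y) + (w * w * w + w) * (?My * y * x - y * x * ?My)"
    unfolding c_def
    by (simp add: algebra_simps v_w_cancel scalar_commute[of x] scalar_commute[of y]
        scalar_commute[of z] scalar_commute[of xb] scalar_commute[of yb] scalar_commute[of zb])
  also have "\<dots> = 0"
    using assms by simp
  finally have "c * yb - yb * c = 0"
    by (rule v_plus_w_cancel)
  then show ?thesis
    by simp
qed

lemma qcomm_bar_before:
  assumes "x * z = z * x" "z * xb = xb * z"
    and "x * yb - v * yb * x = xb * y - v * y * xb"
  defines "d \<equiv> qcomm y z" and "f \<equiv> qcomm yb z"
  shows "d * xb = w * (xb * d) + f * x - w * (x * f)"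
proof -
  let ?Cxz = "x * z - z * x" and ?Czxb = "z * xb - xb * z"
  let ?M = "x * yb - v * yb * x - (xb * y - v * y * xb)"
  have "d * xb - (w * (xb * d) + f * x - w * (x * f)) =
      w * w * (?Cxz * yb) - yb * ?Cxz - w * (?M * z) + w * w * (z * ?M)
      + w * w * (?Czxb * y) - y * ?Czxb"
    unfolding d_def f_def
    by (simp add: algebra_simps v_w_cancel scalar_commute[of x] scalar_commute[of y]
        scalar_commute[of z] scalar_commute[of xb] scalar_commute[of yb])
  also have "\<dots> = 0"
    using assms by simp
  finally show ?thesis
    by simp
qed

end

(*
  The Serre relations with G m in the quadratic position are not assumed, so that replacing E m
  by its odd counterpart gives an instance (serre_family_bar).
*)
locale serre_family = central_scalars v w for v w :: "'a::ring_1" +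
  fixes G :: "nat \<Rightarrow> 'a" and n m :: nat
  assumes far_commute: "\<And>a b. 1 \<le> a \<Longrightarrow> a < n \<Longrightarrow> 1 \<le> b \<Longrightarrow> b < n
      \<Longrightarrow> a + 1 < b \<or> b + 1 < a \<Longrightarrow> G a * G b = G b * G a"
    and serre: "\<And>a b. 1 \<le> a \<Longrightarrow> a < n \<Longrightarrow> 1 \<le> b \<Longrightarrow> b < n \<Longrightarrow> a = b + 1 \<or> b = a + 1 \<Longrightarrow> a \<noteq> m
      \<Longrightarrow> G a * G a * G b - (v + w) * G a * G b * G a + G b * G a * G a = 0"
begin

abbreviation R where "R \<equiv> root_vector w G"

lemmas scalar_simps = v_w_cancel scalar_commute[of "G a" for a]
  scalar_commute[of "root_vector w H i j" for H i j]

lemma root_vector_Suc_left: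
  assumes "1 \<le> i" "Suc (Suc i) \<le> j" "j \<le> n"
  shows "R i j = qcomm (G i) (R (Suc i) j)"
  using assms(2)
proof (induction j rule: dec_induct)
  case base
  show ?case
    by (simp add: root_vector_Suc_right)
next
  case (step j)
  have far: "G i * G j = G j * G i"
    using assms step by (intro far_commute) auto
  from step have r: "R i (Suc j) = qcomm (R i j) (G j)"
    and r': "R (Suc i) (Suc j) = qcomm (R (Suc i) j) (G j)"
    by (simp_all add: root_vector_Suc_right)
  show ?case
    unfolding r r' step.IH
    by (simp add: algebra_simps scalar_simps far far[THEN mult_eq_extend_right])
qed

lemma generator_root_vector_commute_far:
  assumes "1 \<le> i" "i < j" "j \<le> n" "1 \<le> b" "b < n" "b + 1 < i \<or> j < b"
  shows "G b * R i j = R i j * G b"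
  using assms by (intro root_vector_commute far_commute scalar_commute) auto

lemma root_vector_commute_far:
  assumes "1 \<le> k" "k < l" "l < i" "i < j" "j \<le> n"
  shows "R i j * R k l = R k l * R i j"
  using assms
  by (intro root_vector_commute generator_root_vector_commute_far[symmetric] scalar_commute) auto

lemma root_vector_generator_last:
  assumes "1 \<le> i" "i < j" "j < n" "m \<noteq> j"
  shows "R i (Suc j) * G j = v * (G j * R i (Suc j))"
proof -
  obtain p where j: "j = Suc p"
    using assms(2) by (cases j) auto
  from assms(2) have "i \<le> p"
    by (simp add: j)
  then show ?thesis
  proof (induction i rule: inc_induct)
    case base
    have serre_j: "G j * G j * G p - (v + w) * G j * G p * G j + G p * G j * G j = 0"
      using assms base by (intro serre) (auto simp: j)
    have r: "R p (Suc j) = qcomm (G p) (G j)"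
      by (simp add: j root_vector_Suc_right)
    have "R p (Suc j) * G j - v * (G j * R p (Suc j))
        = - (G j * G j * G p - (v + w) * G j * G p * G j + G p * G j * G j)"
      unfolding r by (simp add: algebra_simps scalar_simps)
    with serre_j show ?case
      by simp
  next
    case (step i)
    have far: "G i * G j = G j * G i"
      using assms step by (intro far_commute) (auto simp: j)
    have l: "R i (Suc j) = qcomm (G i) (R (Suc i) (Suc j))"
      using assms step by (intro root_vector_Suc_left) (auto simp: j)
    show ?case
      unfolding l
      by (simp add: algebra_simps scalar_simps far far[THEN mult_eq_extend_right]
          step.IH step.IH[THEN mult_eq_extend_right])
  qed
qed

lemma generator_root_vector_first:
  assumes "1 \<le> i" "Suc (Suc i) \<le> j" "j \<le> n" "m \<noteq> i"
  shows "G i * R i j = v * (R i j * G i)"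
  using assms(2)
proof (induction j rule: dec_induct)
  case base
  have serre_i:
    "G i * G i * G (Suc i) - (v + w) * G i * G (Suc i) * G i + G (Suc i) * G i * G i = 0"
    using assms by (intro serre) auto
  have r: "R i (Suc (Suc i)) = qcomm (G i) (G (Suc i))"
    by (simp add: root_vector_Suc_right)
  have "G i * R i (Suc (Suc i)) - v * (R i (Suc (Suc i)) * G i)
      = - (G i * G i * G (Suc i) - (v + w) * G i * G (Suc i) * G i + G (Suc i) * G i * G i)"
    unfolding r by (simp add: algebra_simps scalar_simps)
  with serre_i show ?case
    by simp
next
  case (step j)
  have far: "G i * G j = G j * G i"
    using assms step by (intro far_commute) auto
  have r: "R i (Suc j) = qcomm (R i j) (G j)"
    using step by (intro root_vector_Suc_right) auto
  show ?case
    unfolding r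
    by (simp add: algebra_simps scalar_simps far far[THEN mult_eq_extend_right]
        step.IH step.IH[THEN mult_eq_extend_right])
qed

lemma generator_root_vector_commute_penultimate:
  assumes "1 \<le> i" "i < a" "Suc a < n" "m \<noteq> a"
  shows "G a * R i (Suc (Suc a)) = R i (Suc (Suc a)) * G a"
proof -
  obtain p where a: "a = Suc p"
    using assms(2) by (cases a) auto
  from assms(2) have "i \<le> p"
    by (simp add: a)
  then show ?thesis
  proof (induction i rule: inc_induct)
    case base
    have "G p * G (Suc a) = G (Suc a) * G p"
      and "G a * G a * G p - (v + w) * G a * G p * G a + G p * G a * G a = 0"
      and "G a * G a * G (Suc a) - (v + w) * G a * G (Suc a) * G a + G (Suc a) * G a * G a = 0"
      using assms by (auto simp: a intro: serre far_commute)
    from qcomm_serre_commute[OF this] show ?case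
      by (simp add: a root_vector_Suc_right)
  next
    case (step i)
    have far: "G a * G i = G i * G a"
      using assms step by (intro far_commute) (auto simp: a)
    have l: "R i (Suc (Suc a)) = qcomm (G i) (R (Suc i) (Suc (Suc a)))"
      using assms step by (intro root_vector_Suc_left) (auto simp: a)
    show ?case
      unfolding l
      by (simp add: algebra_simps scalar_simps far far[THEN mult_eq_extend_right]
          step.IH step.IH[THEN mult_eq_extend_right])
  qed
qed

lemma generator_root_vector_commute_inner:
  assumes "1 \<le> i" "i < a" "Suc a < j" "j \<le> n" "m \<noteq> a"
  shows "G a * R i j = R i j * G a"
proof -
  from assms(3) have "Suc (Suc a) \<le> j"
    by simp
  then show ?thesis
  proof (induction j rule: dec_induct)
    case base
    show ?case
      using assms by (intro generator_root_vector_commute_penultimate) auto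
  next
    case (step j)
    have far: "G a * G j = G j * G a"
      using assms step by (intro far_commute) auto
    have r: "R i (Suc j) = qcomm (R i j) (G j)"
      using assms step by (intro root_vector_Suc_right) auto
    show ?case
      unfolding r
      by (simp add: algebra_simps scalar_simps far far[THEN mult_eq_extend_right]
          step.IH step.IH[THEN mult_eq_extend_right])
  qed
qed

lemma root_vector_mult_adjacent:
  assumes "1 \<le> i" "i < j" "j < l" "l \<le> n"
  shows "R i j * R j l = w * (R j l * R i j) - R i l"
proof -
  from assms(3) have "Suc j \<le> l"
    by simp
  then show ?thesis
  proof (induction l rule: dec_induct)
    case base
    show ?case
      using assms(2) by (simp add: root_vector_Suc_right)
  next
    case (step l)
    have c: "R i j * G l = G l * R i j"
      using assms step by (intro generator_root_vector_commute_far[symmetric]) auto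
    have r: "R j (Suc l) = qcomm (R j l) (G l)"
      and r': "R i (Suc l) = qcomm (R i l) (G l)"
      using assms step by (auto intro: root_vector_Suc_right)
    show ?case
      unfolding r r'
      by (simp add: algebra_simps scalar_simps c c[THEN mult_eq_extend_right]
          step.IH step.IH[THEN mult_eq_extend_right])
  qed
qed

lemma root_vector_mult_same_start:
  assumes "1 \<le> i" "i < j" "j < l" "l \<le> n" "m < i \<or> j \<le> m"
  shows "R i j * R i l = v * (R i l * R i j)"
proof -
  from assms(2) have "Suc i \<le> j"
    by simp
  then show ?thesis
  proof (induction j rule: dec_induct)
    case base
    show ?case
      using assms generator_root_vector_first[of i l] by auto
  next
    case (step j)
    have c: "G j * R i l = R i l * G j"
      using assms step by (intro generator_root_vector_commute_inner) auto
    have r: "R i (Suc j) = qcomm (R i j) (G j)"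
      using step by (intro root_vector_Suc_right) auto
    show ?case
      unfolding r
      by (simp add: algebra_simps scalar_simps c c[THEN mult_eq_extend_right]
          step.IH step.IH[THEN mult_eq_extend_right])
  qed
qed

lemma root_vector_mult_same_end:
  assumes "1 \<le> i" "i < k" "k < j" "j \<le> n" "m < k \<or> j \<le> m"
  shows "R i j * R k j = v * (R k j * R i j)"
proof -
  obtain p where j: "j = Suc p"
    using assms(3) by (cases j) auto
  from assms(3) have "k \<le> p"
    by (simp add: j)
  then show ?thesis
  proof (induction k rule: inc_induct)
    case base
    show ?case
      using assms root_vector_generator_last[of i p] by (auto simp: j)
  next
    case (step k)
    have c: "R i j * G k = G k * R i j"
      using assms step by (intro generator_root_vector_commute_inner[symmetric]) (auto simp: j)
    have l: "R k j = qcomm (G k) (R (Suc k) j)"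
      using assms step by (intro root_vector_Suc_left) (auto simp: j)
    show ?case
      unfolding l
      by (simp add: algebra_simps scalar_simps c c[THEN mult_eq_extend_right]
          step.IH step.IH[THEN mult_eq_extend_right])
  qed
qed

lemma root_vector_commute_nested:
  assumes "1 \<le> i" "i < k" "k < l" "l < j" "j \<le> n" "m < k \<or> l \<le> m"
  shows "R i j * R k l = R k l * R i j"
proof -
  from assms(3) have "Suc k \<le> l"
    by simp
  then show ?thesis
  proof (induction l rule: dec_induct)
    case base
    show ?case
      using assms generator_root_vector_commute_inner[of i k j] by auto
  next
    case (step l)
    have c: "R i j * G l = G l * R i j"
      using assms step by (intro generator_root_vector_commute_inner[symmetric]) auto
    have r: "R k (Suc l) = qcomm (R k l) (G l)"
      using step by (intro root_vector_Suc_right) auto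
    show ?case
      unfolding r
      by (simp add: algebra_simps scalar_simps c c[THEN mult_eq_extend_right]
          step.IH step.IH[THEN mult_eq_extend_right])
  qed
qed

lemma root_vector_mult_crossing:
  assumes "1 \<le> i" "i < k" "k < j" "j < l" "l \<le> n" "m < k \<or> j \<le> m"
  shows "R i j * R k l = R k l * R i j + (v - w) * (R i l * R k j)"
proof -
  from assms(4) have "Suc j \<le> l"
    by simp
  then show ?thesis
  proof (induction l rule: dec_induct)
    case base
    have r: "R k (Suc j) = qcomm (R k j) (G j)"
      using assms by (intro root_vector_Suc_right) auto
    have r': "R i j * G j = w * (G j * R i j) - R i (Suc j)"
      using assms by (simp add: root_vector_Suc_right)
    have same_end: "R i j * R k j = v * (R k j * R i j)"
      using assms by (intro root_vector_mult_same_end) auto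
    have nested: "R k j * R i (Suc j) = R i (Suc j) * R k j"
      using assms by (intro root_vector_commute_nested[symmetric]) auto
    show ?case
      unfolding r
      by (simp add: algebra_simps scalar_simps r' r'[THEN mult_eq_extend_right]
          same_end same_end[THEN mult_eq_extend_right] nested nested[THEN mult_eq_extend_right])
  next
    case (step l)
    have c: "R i j * G l = G l * R i j" and c': "R k j * G l = G l * R k j"
      using assms step by (auto intro!: generator_root_vector_commute_far[symmetric])
    have r: "R k (Suc l) = qcomm (R k l) (G l)"
      and r': "R i (Suc l) = qcomm (R i l) (G l)"
      using assms step by (auto intro: root_vector_Suc_right)
    show ?case
      unfolding r r'
      by (simp add: algebra_simps scalar_simps c c[THEN mult_eq_extend_right]
          c' c'[THEN mult_eq_extend_right] step.IH step.IH[THEN mult_eq_extend_right])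
  qed
qed

end

locale queer_positive_part = central_scalars v w for v w :: "'a::ring_1" +
  fixes E Eb :: "nat \<Rightarrow> 'a" and n :: nat
  assumes far_commute_E: "\<And>a b. 1 \<le> a \<Longrightarrow> a < n \<Longrightarrow> 1 \<le> b \<Longrightarrow> b < n
      \<Longrightarrow> a + 1 < b \<or> b + 1 < a \<Longrightarrow> E a * E b = E b * E a"
    and commute_E_Eb: "\<And>a b. 1 \<le> a \<Longrightarrow> a < n \<Longrightarrow> 1 \<le> b \<Longrightarrow> b < n
      \<Longrightarrow> \<not> (a = b + 1 \<or> b = a + 1) \<Longrightarrow> E a * Eb b = Eb b * E a"
    and serre_E: "\<And>a b. 1 \<le> a \<Longrightarrow> a < n \<Longrightarrow> 1 \<le> b \<Longrightarrow> b < n \<Longrightarrow> a = b + 1 \<or> b = a + 1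
      \<Longrightarrow> E a * E a * E b - (v + w) * E a * E b * E a + E b * E a * E a = 0"
    and serre_Eb: "\<And>a b. 1 \<le> a \<Longrightarrow> a < n \<Longrightarrow> 1 \<le> b \<Longrightarrow> b < n \<Longrightarrow> a = b + 1 \<or> b = a + 1
      \<Longrightarrow> E a * E a * Eb b - (v + w) * E a * Eb b * E a + Eb b * E a * E a = 0"
    and mixed_E_Eb: "\<And>a. 1 \<le> a \<Longrightarrow> a + 1 < n
      \<Longrightarrow> E a * Eb (a + 1) - v * Eb (a + 1) * E a = Eb a * E (a + 1) - v * E (a + 1) * Eb a"
begin

(* The index 0 is outside 1..n-1, so here no Serre relation is left out. *)
sublocale serre_family v w E n 0
  by unfold_locales (auto intro: far_commute_E serre_E)

lemma serre_family_bar: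
  assumes "1 \<le> p" "p < n"
  shows "serre_family v w (E(p := Eb p)) n p"
proof unfold_locales
  fix a b
  assume "1 \<le> a" "a < n" "1 \<le> b" "b < n" "a + 1 < b \<or> b + 1 < a"
  then show "(E(p := Eb p)) a * (E(p := Eb p)) b = (E(p := Eb p)) b * (E(p := Eb p)) a"
    using far_commute_E[of a b] commute_E_Eb[of a b] commute_E_Eb[of b a] by auto
next
  fix a b
  assume "1 \<le> a" "a < n" "1 \<le> b" "b < n" "a = b + 1 \<or> b = a + 1" "a \<noteq> p"
  then show "(E(p := Eb p)) a * (E(p := Eb p)) a * (E(p := Eb p)) b
      - (v + w) * (E(p := Eb p)) a * (E(p := Eb p)) b * (E(p := Eb p)) a
      + (E(p := Eb p)) b * (E(p := Eb p)) a * (E(p := Eb p)) a = 0"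
    using serre_E[of a b] serre_Eb[of a b] by auto
qed

(*
  Rb k l is the paper's \bar E_{k,l} (qEb_eq_root_vector); Rb_first i j is, up to sign,
  E_{\bar i} E_{i+1,j} - v^-1 E_{i+1,j} E_{\bar i} (Rb_first_eq_qcomm).
*)
definition Rb :: "nat \<Rightarrow> nat \<Rightarrow> 'a" where
  "Rb k l = root_vector w (E(l - 1 := Eb (l - 1))) k l"

definition Rb_first :: "nat \<Rightarrow> nat \<Rightarrow> 'a" where
  "Rb_first i j = root_vector w (E(i := Eb i)) i j"

lemmas bar_scalar_simps = scalar_simps scalar_commute[of "Eb a" for a]
  scalar_commute[of "Rb k l" for k l] scalar_commute[of "Rb_first k l" for k l]

lemma Rb_Suc [simp]: "Rb k (Suc k) = Eb k"
  by (simp add: Rb_def)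

lemma root_vector_bar_family:
  "i < j \<Longrightarrow> p < i \<or> j \<le> p \<Longrightarrow> root_vector w (E(p := Eb p)) i j = R i j"
  by (rule root_vector_cong) auto

lemma Rb_Suc_right:
  assumes "k < l"
  shows "Rb k (Suc l) = qcomm (R k l) (Eb l)"
  using assms root_vector_bar_family[of k l l] by (simp add: Rb_def root_vector_Suc_right)

lemma Rb_Suc_left:
  assumes "1 \<le> i" "Suc (Suc i) \<le> j" "j \<le> n"
  shows "Rb i j = qcomm (E i) (Rb (Suc i) j)"
proof -
  obtain p where j: "j = Suc p"
    using assms(2) by (cases j) auto
  then show ?thesis
    using assms serre_family.root_vector_Suc_left[OF serre_family_bar[of p], of i j]
    by (simp add: Rb_def)
qed

lemma Rb_first_Suc_right:
  assumes "i < j"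
  shows "Rb_first i (Suc j) = qcomm (Rb_first i j) (E j)"
  using assms by (simp add: Rb_first_def root_vector_Suc_right)

lemma Rb_first_eq_qcomm:
  assumes "1 \<le> i" "Suc (Suc i) \<le> j" "j \<le> n"
  shows "Rb_first i j = qcomm (Eb i) (R (Suc i) j)"
proof -
  interpret bar: serre_family v w "E(i := Eb i)" n i
    using assms by (intro serre_family_bar) auto
  have "bar.R i j = qcomm (Eb i) (bar.R (Suc i) j)"
    using assms bar.root_vector_Suc_left[of i j] by simp
  then show ?thesis
    using assms root_vector_bar_family[of "Suc i" j i] by (simp add: Rb_first_def)
qed

lemma root_vector_commute_bar_enclosing:
  assumes "1 \<le> k" "k < i" "i < j" "j < l" "l \<le> n"
  shows "R i j * Rb k l = Rb k l * R i j"
proof -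
  obtain p where l: "l = Suc p"
    using assms(4) by (cases l) auto
  interpret bar: serre_family v w "E(p := Eb p)" n p
    using assms by (intro serre_family_bar) (auto simp: l)
  have "bar.R k l * bar.R i j = bar.R i j * bar.R k l"
    using assms by (intro bar.root_vector_commute_nested) (auto simp: l)
  then show ?thesis
    using assms by (simp add: l Rb_def root_vector_bar_family)
qed

lemma root_vector_mult_bar_adjacent_right:
  assumes "1 \<le> i" "i < j" "j < l" "l \<le> n"
  shows "R i j * Rb j l = w * (Rb j l * R i j) - Rb i l"
proof -
  obtain p where l: "l = Suc p"
    using assms(3) by (cases l) auto
  interpret bar: serre_family v w "E(p := Eb p)" n p
    using assms by (intro serre_family_bar) (auto simp: l)
  have "bar.R i j * bar.R j l = w * (bar.R j l * bar.R i j) - bar.R i l"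
    using assms by (intro bar.root_vector_mult_adjacent) (auto simp: l)
  then show ?thesis
    using assms by (simp add: l Rb_def root_vector_bar_family)
qed

lemma root_vector_mult_bar_same_start_longer:
  assumes "1 \<le> i" "i < j" "j < l" "l \<le> n"
  shows "R i j * Rb i l = v * (Rb i l * R i j)"
proof -
  obtain p where l: "l = Suc p"
    using assms(3) by (cases l) auto
  interpret bar: serre_family v w "E(p := Eb p)" n p
    using assms by (intro serre_family_bar) (auto simp: l)
  have "bar.R i j * bar.R i l = v * (bar.R i l * bar.R i j)"
    using assms by (intro bar.root_vector_mult_same_start) (auto simp: l)
  then show ?thesis
    using assms by (simp add: l Rb_def root_vector_bar_family)
qed

lemma root_vector_mult_bar_crossing_right:
  assumes "1 \<le> i" "i < k" "k < j" "j < l" "l \<le> n"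
  shows "R i j * Rb k l = Rb k l * R i j + (v - w) * (R k j * Rb i l)"
proof -
  obtain p where l: "l = Suc p"
    using assms(4) by (cases l) auto
  interpret bar: serre_family v w "E(p := Eb p)" n p
    using assms by (intro serre_family_bar) (auto simp: l)
  have "bar.R i j * bar.R k l = bar.R k l * bar.R i j + (v - w) * (bar.R i l * bar.R k j)"
    using assms by (intro bar.root_vector_mult_crossing) (auto simp: l)
  moreover have "bar.R i l * bar.R k j = bar.R k j * bar.R i l"
    using assms by (intro bar.root_vector_commute_nested) (auto simp: l)
  ultimately show ?thesis
    using assms by (simp add: l Rb_def root_vector_bar_family)
qed

lemma bar_generator_root_vector_commute_far:
  assumes "1 \<le> i" "i < j" "j \<le> n" "1 \<le> a" "a < n" "a + 1 < i \<or> j < a"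
  shows "Eb a * R i j = R i j * Eb a"
  using assms by (intro root_vector_commute commute_E_Eb[symmetric] scalar_commute) auto

lemma root_vector_commute_bar_far:
  assumes "1 \<le> i" "i < j" "j \<le> n" "1 \<le> k" "k < l" "l \<le> n" "j < k \<or> l < i"
  shows "R i j * Rb k l = Rb k l * R i j"
proof -
  obtain p where l: "l = Suc p"
    using assms(5) by (cases l) auto
  have "R i j * E a = E a * R i j" if "k \<le> a" "a < p" for a
    using assms that by (intro generator_root_vector_commute_far[symmetric]) (auto simp: l)
  moreover have "R i j * Eb p = Eb p * R i j"
    using assms by (intro bar_generator_root_vector_commute_far[symmetric]) (auto simp: l)
  ultimately have
    "R i j * root_vector w (E(p := Eb p)) k l = root_vector w (E(p := Eb p)) k l * R i j"
    using assms by (intro root_vector_commute scalar_commute) (auto simp: l)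
  then show ?thesis
    by (simp add: l Rb_def)
qed

lemma root_vector_bar_generator_first:
  assumes "1 \<le> i" "Suc (Suc i) \<le> j" "j \<le> n"
  shows "R i j * Eb i = w * (Eb i * R i j)"
  using assms(2)
proof (induction j rule: dec_induct)
  case base
  have "E i * Eb i = Eb i * E i"
    and "E i * E i * Eb (Suc i) - (v + w) * E i * Eb (Suc i) * E i + Eb (Suc i) * E i * E i = 0"
    and "E i * Eb (Suc i) - v * Eb (Suc i) * E i = Eb i * E (Suc i) - v * E (Suc i) * Eb i"
    using assms by (auto intro: commute_E_Eb serre_Eb mixed_E_Eb[simplified])
  from qcomm_bar_first[OF this] show ?case
    by (simp add: root_vector_Suc_right)
next
  case (step j)
  have c: "E j * Eb i = Eb i * E j"
    using assms step by (intro commute_E_Eb) auto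
  have r: "R i (Suc j) = qcomm (R i j) (E j)"
    using step by (intro root_vector_Suc_right) auto
  show ?case
    unfolding r
    by (simp add: algebra_simps bar_scalar_simps c c[THEN mult_eq_extend_right]
        step.IH step.IH[THEN mult_eq_extend_right])
qed

lemma root_vector_bar_generator_commute_penultimate:
  assumes "1 \<le> i" "i < p" "Suc p < n"
  shows "R i (Suc (Suc p)) * Eb p = Eb p * R i (Suc (Suc p))"
proof -
  obtain q where p: "p = Suc q"
    using assms(2) by (cases p) auto
  from assms(2) have "i \<le> q"
    by (simp add: p)
  then show ?thesis
  proof (induction i rule: inc_induct)
    case base
    have "E q * E (Suc p) = E (Suc p) * E q" "E q * Eb (Suc p) = Eb (Suc p) * E q"
      and "E p * Eb p = Eb p * E p"
      and "E p * E p * E q - (v + w) * E p * E q * E p + E q * E p * E p = 0"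
      and "E p * E p * Eb q - (v + w) * E p * Eb q * E p + Eb q * E p * E p = 0"
      and "E p * E p * Eb (Suc p) - (v + w) * E p * Eb (Suc p) * E p + Eb (Suc p) * E p * E p = 0"
      and "E q * Eb p - v * Eb p * E q = Eb q * E p - v * E p * Eb q"
      and "E p * Eb (Suc p) - v * Eb (Suc p) * E p = Eb p * E (Suc p) - v * E (Suc p) * Eb p"
      using assms p
      by (auto intro: far_commute_E commute_E_Eb serre_E serre_Eb mixed_E_Eb[simplified])
    from qcomm_bar_inner[OF this] show ?case
      by (simp add: p root_vector_Suc_right)
  next
    case (step i)
    have c: "E i * Eb p = Eb p * E i"
      using assms step by (intro commute_E_Eb) (auto simp: p)
    have l: "R i (Suc (Suc p)) = qcomm (E i) (R (Suc i) (Suc (Suc p)))"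
      using assms step by (intro root_vector_Suc_left) (auto simp: p)
    show ?case
      unfolding l
      by (simp add: algebra_simps bar_scalar_simps c c[THEN mult_eq_extend_right]
          step.IH step.IH[THEN mult_eq_extend_right])
  qed
qed

lemma root_vector_bar_generator_commute_inner:
  assumes "1 \<le> i" "i < p" "Suc p < j" "j \<le> n"
  shows "R i j * Eb p = Eb p * R i j"
proof -
  from assms(3) have "Suc (Suc p) \<le> j"
    by simp
  then show ?thesis
  proof (induction j rule: dec_induct)
    case base
    show ?case
      using assms by (intro root_vector_bar_generator_commute_penultimate) auto
  next
    case (step j)
    have c: "E j * Eb p = Eb p * E j"
      using assms step by (intro commute_E_Eb) auto
    have r: "R i (Suc j) = qcomm (R i j) (E j)"
      using assms step by (intro root_vector_Suc_right) auto
    show ?case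
      unfolding r
      by (simp add: algebra_simps bar_scalar_simps c c[THEN mult_eq_extend_right]
          step.IH step.IH[THEN mult_eq_extend_right])
  qed
qed

lemma root_vector_bar_generator_last:
  assumes "1 \<le> i" "i < p" "Suc p \<le> n"
  shows "R i (Suc p) * Eb p
    = w * (Eb p * R i (Suc p)) + Rb i (Suc p) * E p - w * (E p * Rb i (Suc p))"
proof -
  obtain q where p: "p = Suc q"
    using assms(2) by (cases p) auto
  from assms(2) have "i \<le> q"
    by (simp add: p)
  then show ?thesis
  proof (induction i rule: inc_induct)
    case base
    have c: "E p * Eb p = Eb p * E p"
      using assms by (intro commute_E_Eb) auto
    show ?case
      by (simp add: p Rb_Suc_right root_vector_Suc_right algebra_simps bar_scalar_simps
          c[unfolded p] c[unfolded p, THEN mult_eq_extend_right])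
  next
    case (step i)
    have c: "E i * Eb p = Eb p * E i" and c': "E i * E p = E p * E i"
      using assms step by (auto simp: p intro!: commute_E_Eb far_commute_E)
    have l: "R i (Suc p) = qcomm (E i) (R (Suc i) (Suc p))"
      and l': "Rb i (Suc p) = qcomm (E i) (Rb (Suc i) (Suc p))"
      using assms step by (auto simp: p intro!: root_vector_Suc_left Rb_Suc_left)
    show ?case
      unfolding l l'
      by (simp add: algebra_simps bar_scalar_simps c c[THEN mult_eq_extend_right]
          c' c'[THEN mult_eq_extend_right] step.IH step.IH[THEN mult_eq_extend_right])
  qed
qed

lemma root_vector_bar_generator_before:
  assumes "1 \<le> a" "Suc (Suc (Suc a)) \<le> j" "j \<le> n"
  shows "R (Suc a) j * Eb a
    = w * (Eb a * R (Suc a) j) + Rb_first (Suc a) j * E a - w * (E a * Rb_first (Suc a) j)"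
  using assms(2)
proof (induction j rule: dec_induct)
  case base
  have "E a * E (Suc (Suc a)) = E (Suc (Suc a)) * E a"
    and "E (Suc (Suc a)) * Eb a = Eb a * E (Suc (Suc a))"
    and "E a * Eb (Suc a) - v * Eb (Suc a) * E a = Eb a * E (Suc a) - v * E (Suc a) * Eb a"
    using assms by (auto intro: far_commute_E commute_E_Eb mixed_E_Eb[simplified])
  from qcomm_bar_before[OF this] show ?case
    by (simp add: Rb_first_def root_vector_Suc_right)
next
  case (step j)
  have c: "E j * Eb a = Eb a * E j" and c': "E j * E a = E a * E j"
    using assms step by (auto intro!: commute_E_Eb far_commute_E)
  have r: "R (Suc a) (Suc j) = qcomm (R (Suc a) j) (E j)"
    and r': "Rb_first (Suc a) (Suc j) = qcomm (Rb_first (Suc a) j) (E j)"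
    using step by (auto intro!: root_vector_Suc_right Rb_first_Suc_right)
  show ?case
    unfolding r r'
    by (simp add: algebra_simps bar_scalar_simps c c[THEN mult_eq_extend_right]
        c' c'[THEN mult_eq_extend_right] step.IH step.IH[THEN mult_eq_extend_right])
qed

lemma root_vector_mult_bar_same_start_shorter:
  assumes "1 \<le> i" "i < l" "l < j" "j \<le> n"
  shows "R i j * Rb i l = w * (Rb i l * R i j)"
proof (cases "l = Suc i")
  case True
  then show ?thesis
    using assms root_vector_bar_generator_first[of i j] by simp
next
  case False
  then obtain p where l: "l = Suc p" and "i < p"
    using assms(2) by (cases l) auto
  have b: "Rb i l = qcomm (R i p) (Eb p)"
    using \<open>i < p\<close> by (simp add: l Rb_Suc_right)
  have c: "R i j * Eb p = Eb p * R i j"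
    using assms \<open>i < p\<close> by (intro root_vector_bar_generator_commute_inner) (auto simp: l)
  have "R i p * R i j = v * (R i j * R i p)"
    using assms \<open>i < p\<close> by (intro root_vector_mult_same_start) (auto simp: l)
  then have c': "R i j * R i p = w * (R i p * R i j)"
    by (simp add: v_w_cancel)
  show ?thesis
    unfolding b
    by (simp add: algebra_simps bar_scalar_simps c c[THEN mult_eq_extend_right]
        c' c'[THEN mult_eq_extend_right])
qed

lemma root_vector_commute_bar_enclosed:
  assumes "1 \<le> i" "i < k" "k < l" "l < j" "j \<le> n"
  shows "R i j * Rb k l = Rb k l * R i j"
proof (cases "l = Suc k")
  case True
  then show ?thesis
    using assms root_vector_bar_generator_commute_inner[of i k j] by simp
next
  case False
  then obtain p where l: "l = Suc p" and "k < p"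
    using assms(3) by (cases l) auto
  have b: "Rb k l = qcomm (R k p) (Eb p)"
    using \<open>k < p\<close> by (simp add: l Rb_Suc_right)
  have c: "R i j * Eb p = Eb p * R i j"
    using assms \<open>k < p\<close> by (intro root_vector_bar_generator_commute_inner) (auto simp: l)
  have c': "R i j * R k p = R k p * R i j"
    using assms \<open>k < p\<close> by (intro root_vector_commute_nested) (auto simp: l)
  show ?thesis
    unfolding b
    by (simp add: algebra_simps bar_scalar_simps c c[THEN mult_eq_extend_right]
        c' c'[THEN mult_eq_extend_right])
qed

lemma root_vector_mult_bar_crossing_left:
  assumes "1 \<le> k" "k < i" "i < l" "l < j" "j \<le> n"
  shows "R i j * Rb k l = Rb k l * R i j + w * (Rb i l * R k j) - v * (R k j * Rb i l)"
proof (cases "l = Suc i")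
  case True
  have b: "Rb k l = qcomm (R k i) (Eb i)"
    using assms by (simp add: True Rb_Suc_right)
  have c: "R i j * Eb i = w * (Eb i * R i j)"
    using assms True by (intro root_vector_bar_generator_first) auto
  have adj: "R k i * R i j = w * (R i j * R k i) - R k j"
    using assms True by (intro root_vector_mult_adjacent) auto
  have c': "R i j * R k i = v * (R k i * R i j) + v * R k j"
  proof -
    have "R i j * R k i = v * (w * (R i j * R k i))"
      by (simp add: v_w_cancel)
    also have "w * (R i j * R k i) = R k i * R i j + R k j"
      by (simp add: adj)
    finally show ?thesis
      by (simp add: distrib_left)
  qed
  show ?thesis
    unfolding b
    by (simp add: True algebra_simps bar_scalar_simps c c[THEN mult_eq_extend_right]
        c' c'[THEN mult_eq_extend_right])
next
  case False
  then obtain p where l: "l = Suc p" and "i < p"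
    using assms(3) by (cases l) auto
  have b: "Rb k l = qcomm (R k p) (Eb p)"
    and b': "Rb i l = qcomm (R i p) (Eb p)"
    using assms \<open>i < p\<close> by (simp_all add: l Rb_Suc_right)
  have c: "R i j * Eb p = Eb p * R i j" and c': "R k j * Eb p = Eb p * R k j"
    using assms \<open>i < p\<close> by (auto simp: l intro!: root_vector_bar_generator_commute_inner)
  have "R k p * R i j = R i j * R k p + (v - w) * (R k j * R i p)"
    using assms \<open>i < p\<close> by (intro root_vector_mult_crossing) (auto simp: l)
  then have d: "R i j * R k p = R k p * R i j - (v - w) * (R k j * R i p)"
    by (simp add: algebra_simps)
  have d': "R k j * R i p = R i p * R k j"
    using assms \<open>i < p\<close> by (intro root_vector_commute_nested) (auto simp: l)
  show ?thesis
    unfolding b b'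
    by (simp add: algebra_simps bar_scalar_simps c c[THEN mult_eq_extend_right]
        c' c'[THEN mult_eq_extend_right] d d[THEN mult_eq_extend_right]
        d' d'[THEN mult_eq_extend_right])
qed

lemma root_vector_commute_bar_same:
  assumes "1 \<le> i" "i < j" "j \<le> n"
  shows "R i j * Rb i j = Rb i j * R i j"
proof (cases "j = Suc i")
  case True
  then show ?thesis
    using assms commute_E_Eb[of i i] by simp
next
  case False
  then obtain p where j: "j = Suc p" and "i < p"
    using assms(2) by (cases j) auto
  let ?R = "R i j" and ?B = "Rb i j" and ?r = "R i p" and ?e = "E p" and ?eb = "Eb p"
  have b: "?B = qcomm ?r ?eb"
    using \<open>i < p\<close> by (simp add: j Rb_Suc_right)
  have r: "?R = qcomm ?r ?e"
    using \<open>i < p\<close> by (simp add: j root_vector_Suc_right)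
  have last: "?R * ?eb = w * (?eb * ?R) + ?B * ?e - w * (?e * ?B)"
    using assms \<open>i < p\<close> by (simp add: j root_vector_bar_generator_last)
  have start: "?r * ?R = v * (?R * ?r)"
    using assms \<open>i < p\<close> by (intro root_vector_mult_same_start) (auto simp: j)
  have start_bar: "?r * ?B = v * (?B * ?r)"
    using assms \<open>i < p\<close> by (intro root_vector_mult_bar_same_start_longer) (auto simp: j)
  let ?Zb = "?B - qcomm ?r ?eb" and ?Zr = "?R - qcomm ?r ?e"
  let ?Zl = "?R * ?eb - (w * (?eb * ?R) + ?B * ?e - w * (?e * ?B))"
  let ?Zs = "?r * ?R - v * (?R * ?r)" and ?Zs' = "?r * ?B - v * (?B * ?r)"
  have "(v + w) * (?R * ?B - ?B * ?R) =
      v * (?R * ?Zb) - w * (?Zb * ?R) + ?Zl * ?r - ?r * ?Zl + ?Zs * ?eb - w * w * (?eb * ?Zs)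
      - ?Zs' * ?e + w * w * (?e * ?Zs') + w * (?Zr * ?B) - v * (?B * ?Zr)"
    by (simp add: algebra_simps bar_scalar_simps)
  also have "\<dots> = 0"
    using b r last start start_bar by simp
  finally have "?R * ?B - ?B * ?R = 0"
    by (rule v_plus_w_cancel)
  then show ?thesis
    by simp
qed

lemma root_vector_mult_bar_same_end_shorter:
  assumes "1 \<le> i" "i < k" "k < j" "j \<le> n"
  shows "R i j * Rb k j = w * (Rb k j * R i j) + Rb i j * R k j - w * (R k j * Rb i j)"
proof -
  obtain p where j: "j = Suc p"
    using assms(3) by (cases j) auto
  show ?thesis
  proof (cases "k = p")
    case True
    then show ?thesis
      using assms root_vector_bar_generator_last[of i p] by (simp add: j)
  next
    case False
    with assms(3) have "k < p"
      by (simp add: j)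
    have b: "Rb k j = qcomm (R k p) (Eb p)"
      and r: "R k j = qcomm (R k p) (E p)"
      using \<open>k < p\<close> by (simp_all add: j Rb_Suc_right root_vector_Suc_right)
    have last: "R i j * Eb p = w * (Eb p * R i j) + Rb i j * E p - w * (E p * Rb i j)"
      using assms \<open>k < p\<close> by (simp add: j root_vector_bar_generator_last)
    have c: "R i j * R k p = R k p * R i j"
      using assms \<open>k < p\<close> by (intro root_vector_commute_nested) (auto simp: j)
    have c': "Rb i j * R k p = R k p * Rb i j"
      using assms \<open>k < p\<close> by (intro root_vector_commute_bar_enclosing[symmetric]) (auto simp: j)
    show ?thesis
      unfolding b r
      by (simp add: algebra_simps bar_scalar_simps last last[THEN mult_eq_extend_right]
          c c[THEN mult_eq_extend_right] c' c'[THEN mult_eq_extend_right])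
  qed
qed

lemma root_vector_mult_bar_same_end_longer:
  assumes "1 \<le> k" "k < i" "i < j" "j \<le> n"
  shows "R i j * Rb k j = v * (Rb k j * R i j) - v * (R k j * Rb i j) + Rb i j * R k j"
proof -
  obtain p where j: "j = Suc p"
    using assms(3) by (cases j) auto
  from assms(3) have "i \<le> p"
    by (simp add: j)
  then show ?thesis
  proof (induction i rule: inc_induct)
    case base
    have b: "Rb k (Suc p) = qcomm (R k p) (Eb p)"
      and r: "R k (Suc p) = qcomm (R k p) (E p)"
      using assms by (simp_all add: j Rb_Suc_right root_vector_Suc_right)
    have c: "E p * Eb p = Eb p * E p"
      using assms by (intro commute_E_Eb) (auto simp: j)
    show ?case
      unfolding j Rb_Suc root_vector_Suc b r
      by (simp add: algebra_simps bar_scalar_simps c c[THEN mult_eq_extend_right])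
  next
    case (step i)
    have l: "R i j = qcomm (E i) (R (Suc i) j)"
      and l': "Rb i j = qcomm (E i) (Rb (Suc i) j)"
      using assms step by (auto simp: j intro!: root_vector_Suc_left Rb_Suc_left)
    have c: "E i * Rb k j = Rb k j * E i"
      using assms step root_vector_commute_bar_enclosing[of k i "Suc i" j] by (simp add: j)
    have c': "E i * R k j = R k j * E i"
      using assms step by (intro generator_root_vector_commute_inner) (auto simp: j)
    show ?case
      unfolding l l'
      by (simp add: algebra_simps bar_scalar_simps c c[THEN mult_eq_extend_right]
          c' c'[THEN mult_eq_extend_right] step.IH step.IH[THEN mult_eq_extend_right])
  qed
qed

lemma root_vector_mult_bar_adjacent_left:
  assumes "1 \<le> k" "k < i" "Suc i < j" "j \<le> n"
  shows "R i j * Rb k i = w * (Rb k i * R i j) + Rb_first i j * R k i - w * (R k i * Rb_first i j)"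
proof -
  obtain a where i: "i = Suc a"
    using assms(2) by (cases i) auto
  show ?thesis
  proof (cases "k = a")
    case True
    then show ?thesis
      using assms root_vector_bar_generator_before[of a j] by (simp add: i)
  next
    case False
    with assms(2) have "k < a"
      by (simp add: i)
    have b: "Rb k i = qcomm (R k a) (Eb a)"
      and r: "R k i = qcomm (R k a) (E a)"
      using \<open>k < a\<close> by (simp_all add: i Rb_Suc_right root_vector_Suc_right)
    have before:
      "R i j * Eb a = w * (Eb a * R i j) + Rb_first i j * E a - w * (E a * Rb_first i j)"
      using assms \<open>k < a\<close> by (simp add: i root_vector_bar_generator_before)
    have c: "R i j * R k a = R k a * R i j"
      using assms \<open>k < a\<close> by (intro root_vector_commute_far) (auto simp: i)
    have c': "Rb_first i j * R k a = R k a * Rb_first i j"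
    proof -
      interpret bar: serre_family v w "E(i := Eb i)" n i
        using assms by (intro serre_family_bar) auto
      have "bar.R i j * bar.R k a = bar.R k a * bar.R i j"
        using assms \<open>k < a\<close> by (intro bar.root_vector_commute_far) (auto simp: i)
      then show ?thesis
        using \<open>k < a\<close> by (simp add: Rb_first_def i root_vector_bar_family)
    qed
    show ?thesis
      unfolding b r
      by (simp add: algebra_simps bar_scalar_simps before before[THEN mult_eq_extend_right]
          c c[THEN mult_eq_extend_right] c' c'[THEN mult_eq_extend_right])
  qed
qed

end

lemma vv_nonzero: "vv \<noteq> 0"
  by (simp add: vv_def Zero_fract_def eq_fract)

lemma vv_plus_inverse_nonzero: "vv + inverse vv \<noteq> 0"
proof
  assume sum_zero: "vv + inverse vv = 0"
  have "vv * vv + 1 = vv * (vv + inverse vv)"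
    using vv_nonzero by (simp add: distrib_left)
  then have "vv * vv + 1 = 0"
    by (simp add: sum_zero)
  moreover have "vv * vv + 1 = Fract ([:0, 1:] * [:0, 1:] + 1) 1"
    by (simp add: vv_def One_fract_def)
  ultimately show False
    by (simp add: Zero_fract_def eq_fract one_pCons)
qed

lemma qv_algebra_central_scalars:
  assumes "qv_algebra s"
  shows "central_scalars (s vv) (s (inverse vv))"
proof
  have s1: "s 1 = 1" and add: "\<And>a b. s (a + b) = s a + s b" and mult: "\<And>a b. s (a * b) = s a * s b"
    and central: "\<And>a x. s a * x = x * s a"
    using assms unfolding qv_algebra_def by blast+
  show "s vv * s (inverse vv) = 1"
    using vv_nonzero by (simp flip: mult s1)
  show "s vv * x = x * s vv" "s (inverse vv) * x = x * s (inverse vv)" for x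
    by (rule central)+
  show "x = 0" if "(s vv + s (inverse vv)) * x = 0" for x
  proof -
    have "x = s (inverse (vv + inverse vv) * (vv + inverse vv)) * x"
      using vv_plus_inverse_nonzero by (simp add: s1)
    also have "\<dots> = s (inverse (vv + inverse vv)) * ((s vv + s (inverse vv)) * x)"
      by (simp add: mult add mult.assoc)
    finally show "x = 0"
      using that by simp
  qed
qed

lemma qv_algebra_diff:
  assumes "qv_algebra s"
  shows "s (a - b) = s a - s b"
proof -
  have "s (a - b) + s b = s a"
    using assms unfolding qv_algebra_def by (metis diff_add_cancel)
  then show ?thesis
    by (simp add: eq_diff_eq)
qed

lemma qq_relations_queer_positive_part:
  assumes "qv_algebra s" "qq_relations s n K Ki Kb E Eb F Fb"
  shows "queer_positive_part (s vv) (s (inverse vv)) E Eb n"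
proof -
  interpret central_scalars "s vv" "s (inverse vv)"
    using assms(1) by (rule qv_algebra_central_scalars)
  have s_sum: "s (vv + inverse vv) = s vv + s (inverse vv)"
    using assms(1) by (simp add: qv_algebra_def)
  have QQ5: "\<forall>i\<in>{1..n-1}. \<forall>j\<in>{1..n-1}.
      (\<not> (i = j + 1 \<or> j = i + 1) \<longrightarrow> E i * Eb j = Eb j * E i) \<and>
      (i + 1 < j \<or> j + 1 < i \<longrightarrow> E i * E j = E j * E i)"
    and QQ5_mixed: "\<forall>i. 1 \<le> i \<and> i + 1 \<le> n - 1 \<longrightarrow>
      E i * Eb (i+1) - s vv * Eb (i+1) * E i = Eb i * E (i+1) - s vv * E (i+1) * Eb i"
    and QQ6: "\<forall>i\<in>{1..n-1}. \<forall>j\<in>{1..n-1}. (i = j + 1 \<or> j = i + 1) \<longrightarrow>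
      (\<forall>X\<in>{E j, Eb j}. E i ^ 2 * X - s (vv + inverse vv) * E i * X * E i + X * E i ^ 2 = 0)"
    using assms(2) unfolding qq_relations_def Let_def by blast+
  show ?thesis
  proof unfold_locales
    fix a b
    assume "1 \<le> a" "a < n" "1 \<le> b" "b < n"
    then have ab: "a \<in> {1..n-1}" "b \<in> {1..n-1}"
      by auto
    show "E a * E b = E b * E a" if "a + 1 < b \<or> b + 1 < a"
      using QQ5 ab that by blast
    show "E a * Eb b = Eb b * E a" if "\<not> (a = b + 1 \<or> b = a + 1)"
      using QQ5 ab that by blast
    assume "a = b + 1 \<or> b = a + 1"
    then have "\<forall>X\<in>{E b, Eb b}. E a ^ 2 * X - s (vv + inverse vv) * E a * X * E a + X * E a ^ 2 = 0"
      using QQ6 ab by blast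
    then show "E a * E a * E b - (s vv + s (inverse vv)) * E a * E b * E a + E b * E a * E a = 0"
      and "E a * E a * Eb b - (s vv + s (inverse vv)) * E a * Eb b * E a + Eb b * E a * E a = 0"
      by (simp_all add: s_sum power2_eq_square mult.assoc)
  next
    show "E a * Eb (a + 1) - s vv * Eb (a + 1) * E a = Eb a * E (a + 1) - s vv * E (a + 1) * Eb a"
      if "1 \<le> a" "a + 1 < n" for a
      using QQ5_mixed that by auto
  qed
qed

lemma rootEb_aux_eq_rootE_aux:
  "rootEb_aux w E Eb k d = rootE_aux w (E(k + d := Eb (k + d))) k d"
proof (cases d)
  case (Suc d')
  have "rootE_aux w (E(k + Suc d' := Eb (k + Suc d'))) k d' = rootE_aux w E k d'"
    by (rule rootE_aux_cong) auto
  then show ?thesis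
    using Suc by simp
qed simp

lemma qEb_eq_root_vector:
  "k < l \<Longrightarrow> qEb s E Eb k l = root_vector (s (inverse vv)) (E(l - 1 := Eb (l - 1))) k l"
  by (simp add: qEb_def root_vector_def rootEb_aux_eq_rootE_aux)

theorem lemma2p10:
  fixes s :: "qv \<Rightarrow> 'a::ring_1"
    and K Ki Kb E Eb F Fb :: "nat \<Rightarrow> 'a"
    and n i j k l :: nat
  assumes alg: "qv_algebra s"
    and rel: "qq_relations s n K Ki Kb E Eb F Fb"
    and ij: "1 \<le> i" "i < j" "j \<le> n"
    and kl: "1 \<le> k" "k < l" "l \<le> n"
  shows
   "((i < j \<and> j < k \<and> k < l) \<or> (i < k \<and> k < l \<and> l < j) \<or> (i = k \<and> j = l) \<or>
     (k < l \<and> l < i \<and> i < j) \<or> (k < i \<and> i < j \<and> j < l)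
       \<longrightarrow> qE s E i j * qEb s E Eb k l = qEb s E Eb k l * qE s E i j)
    \<and> (i < j \<and> j = k \<and> k < l \<longrightarrow>
         qE s E i j * qEb s E Eb k l
           = s (inverse vv) * qEb s E Eb k l * qE s E i j - qEb s E Eb i l)
    \<and> (i = k \<and> k < j \<and> j < l \<longrightarrow>
         qE s E i j * qEb s E Eb k l = s vv * qEb s E Eb k l * qE s E i j)
    \<and> (i < k \<and> k < j \<and> j < l \<longrightarrow>
         qE s E i j * qEb s E Eb k l
           = qEb s E Eb k l * qE s E i j + s (vv - inverse vv) * qE s E k j * qEb s E Eb i l)
    \<and> (i < k \<and> k < j \<and> j = l \<longrightarrow>
         qE s E i j * qEb s E Eb k l
           = s (inverse vv) * qEb s E Eb k l * qE s E i j + qEb s E Eb i j * qE s E k j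
             - s (inverse vv) * qE s E k j * qEb s E Eb i j)
    \<and> (k < l \<and> l = i \<and> i < j \<and> j > i + 1 \<longrightarrow>
         qE s E i j * qEb s E Eb k l
           = s (inverse vv) * qEb s E Eb k l * qE s E i j
             - (Eb i * qE s E (i+1) j - s (inverse vv) * qE s E (i+1) j * Eb i) * qE s E k i
             + s (inverse vv) * qE s E k i
                 * (Eb i * qE s E (i+1) j - s (inverse vv) * qE s E (i+1) j * Eb i))
    \<and> (k = i \<and> i < l \<and> l < j \<longrightarrow>
         qE s E i j * qEb s E Eb k l = s (inverse vv) * qEb s E Eb k l * qE s E i j)
    \<and> (k < i \<and> i < l \<and> l < j \<longrightarrow>
         qE s E i j * qEb s E Eb k l
           = qEb s E Eb k l * qE s E i j + s (inverse vv) * qEb s E Eb i l * qE s E k j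
             - s vv * qE s E k j * qEb s E Eb i l)
    \<and> (k < i \<and> i < j \<and> j = l \<longrightarrow>
         qE s E i j * qEb s E Eb k l
           = s vv * qEb s E Eb k l * qE s E i j - s vv * qE s E k j * qEb s E Eb i j
             + qEb s E Eb i j * qE s E k j)"
proof -
  interpret queer_positive_part "s vv" "s (inverse vv)" E Eb n
    using alg rel by (rule qq_relations_queer_positive_part)
  have qE: "qE s E a b = R a b" for a b
    by (simp add: qE_def root_vector_def)
  have qEb: "a < b \<Longrightarrow> qEb s E Eb a b = Rb a b" for a b
    by (simp add: qEb_eq_root_vector Rb_def)
  note simps = qE qEb qv_algebra_diff[OF alg] mult.assoc
  show ?thesis
    using ij kl
    apply (intro conjI impI)
    subgoal
      using root_vector_commute_bar_far[of i j k l] root_vector_commute_bar_enclosed[of i k l j]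
        root_vector_commute_bar_same[of i j] root_vector_commute_bar_enclosing[of k i j l]
      by (auto simp: simps)
    subgoal using root_vector_mult_bar_adjacent_right[of i j l] by (simp add: simps)
    subgoal using root_vector_mult_bar_same_start_longer[of i j l] by (simp add: simps)
    subgoal using root_vector_mult_bar_crossing_right[of i k j l] by (simp add: simps)
    subgoal using root_vector_mult_bar_same_end_shorter[of i k j] by (simp add: simps)
    subgoal using root_vector_mult_bar_adjacent_left[of k i j]
      by (simp add: qE qEb Rb_first_eq_qcomm algebra_simps)
    subgoal using root_vector_mult_bar_same_start_shorter[of i l j] by (simp add: simps)
    subgoal using root_vector_mult_bar_crossing_left[of k i l j] by (simp add: simps)
    subgoal using root_vector_mult_bar_same_end_longer[of k i j] by (simp add: simps)
    done
qed

end
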